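(* Under the standing assumptions of the context, for every integer $\ell\ge1$ the limits $\lambda_\ell(x,\infty,1/2)$ and $\Lambda_\ell(x,\infty,1/2)$ exist and \[ \lambda_\ell(x,\infty,1/2)=d(\mathcal K_\ell),\qquad \Lambda_\ell(x,\infty,1/2)=\sum_{l=\ell}^\infty d(\mathcal K_l)>0; \] moreover, $d(\mathcal K_\ell)>0$ for infinitely many $\ell$.
   Context: Standing assumptions: $A=\{0,1\}$, $\Sigma=A^{\mathbb N_0}$ with metric $\rho(y,z)=2^{-\min\{i\ge0:\,y_i\ne z_i\}}$ ($y\ne z$) and shift $\sigma$. $\zeta:A\to A^*$ is a binary substitution of constant length $q\ge2$, primitive, aperiodic (its subshift $X_\zeta$ contains a non-$\sigma$-periodic sequence), with $\zeta(0)$ starting with $0$; $x=\lim_k\zeta^k(0)$ its fixed point starting with $0$. For $n\in\mathbb N\cup\{\infty\}$, $n\ge2$, the recurrence plot $R(x,n,1/2)$ has indices $0\le i,j<n$ and entry $1$ iff $x_i=x_j$. A line of length $\ell$: $(i,j,\ell)$ with $0\le i,j\le n-\ell$, $i\ne j$, entries $(i+k,j+k)=1$ for $0\le k<\ell$, entry $(i-1,j-1)=0$ if $\min\{i,j\}>0$, entry $(i+\ell,j+\ell)=0$ if $\max\{i,j\}<n-\ell$; for $n=\infty$ it is inner if $\min\{i,j\}>0$. For finite $n$: $N_\ell$ = number of all lines of length exactly $\ell$, $\lambda_\ell(x,n,1/2)=N_\ell/(n^2-n)$, $\Lambda_\ell=\sum_{l\ge\ell}\lambda_l$; values at $n=\infty$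 are limits as $n\to\infty$. $\mathcal K_l=\{(i,j)\in\mathbb N^2:(i,j,l)\text{ inner line in }R(x,\infty,1/2)\}$; $d(M)=\lim_n n^{-2}\#(M\cap[0,n)^2)$, known to exist for $M=\mathcal K_l$. *)

theory Defs
  imports Complex_Main
begin

text \<open>Alphabet A = {0,1} represented inside nat; sequences are nat \<Rightarrow> nat.\<close>

definition subst_word :: "(nat \<Rightarrow> nat list) \<Rightarrow> nat list \<Rightarrow> nat list" where
  "subst_word \<zeta> w = concat (map \<zeta> w)"

definition subst_iter :: "(nat \<Rightarrow> nat list) \<Rightarrow> nat \<Rightarrow> nat \<Rightarrow> nat list" where
  "subst_iter \<zeta> k a = (subst_word \<zeta> ^^ k) [a]"

definition binary_const_length :: "(nat \<Rightarrow> nat list) \<Rightarrow> nat \<Rightarrow> bool" where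
  "binary_const_length \<zeta> q \<longleftrightarrow> q \<ge> 2 \<and>
     (\<forall>a\<in>{0,1}. length (\<zeta> a) = q \<and> set (\<zeta> a) \<subseteq> {0,1})"

definition primitive_subst :: "(nat \<Rightarrow> nat list) \<Rightarrow> bool" where
  "primitive_subst \<zeta> \<longleftrightarrow> (\<exists>k>0. \<forall>a\<in>{0,1}. \<forall>b\<in>{0,1}. b \<in> set (subst_iter \<zeta> k a))"

definition is_factor :: "'a list \<Rightarrow> 'a list \<Rightarrow> bool" where
  "is_factor u w \<longleftrightarrow> (\<exists>p s. w = p @ u @ s)"

definition subst_lang :: "(nat \<Rightarrow> nat list) \<Rightarrow> nat list set" where
  "subst_lang \<zeta> = {u. \<exists>k a. a \<in> {0,1} \<and> is_factor u (subst_iter \<zeta> k a)}"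

definition subshift :: "(nat \<Rightarrow> nat list) \<Rightarrow> (nat \<Rightarrow> nat) set" where
  "subshift \<zeta> = {y. (\<forall>i. y i \<in> {0,1}) \<and> (\<forall>i n. map y [i..<i+n] \<in> subst_lang \<zeta>)}"

definition shift_periodic :: "(nat \<Rightarrow> nat) \<Rightarrow> bool" where
  "shift_periodic y \<longleftrightarrow> (\<exists>p>0. \<forall>i. y (i + p) = y i)"

definition aperiodic_subst :: "(nat \<Rightarrow> nat list) \<Rightarrow> bool" where
  "aperiodic_subst \<zeta> \<longleftrightarrow> (\<exists>y\<in>subshift \<zeta>. \<not> shift_periodic y)"

text \<open>x = lim_k zeta^k(0) in the product (rho) topology: every coordinate eventually stabilises\<close>
definition is_fixed_point_limit :: "(nat \<Rightarrow> nat list) \<Rightarrow> (nat \<Rightarrow> nat) \<Rightarrow> bool" where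
  "is_fixed_point_limit \<zeta> x \<longleftrightarrow>
     (\<forall>i. \<exists>K. \<forall>k\<ge>K. i < length (subst_iter \<zeta> k 0) \<and> subst_iter \<zeta> k 0 ! i = x i)"

definition rp_line :: "(nat \<Rightarrow> nat) \<Rightarrow> nat \<Rightarrow> nat \<Rightarrow> nat \<Rightarrow> nat \<Rightarrow> bool" where
  "rp_line x n i j l \<longleftrightarrow> 1 \<le> l \<and> l \<le> n \<and> i \<le> n - l \<and> j \<le> n - l \<and> i \<noteq> j \<and>
     (\<forall>k<l. x (i + k) = x (j + k)) \<and>
     (0 < min i j \<longrightarrow> x (i - 1) \<noteq> x (j - 1)) \<and>
     (max i j < n - l \<longrightarrow> x (i + l) \<noteq> x (j + l))"

definition num_lines :: "(nat \<Rightarrow> nat) \<Rightarrow> nat \<Rightarrow> nat \<Rightarrow> nat" where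
  "num_lines x n l = card {(i, j). rp_line x n i j l}"

definition rp_lambda :: "(nat \<Rightarrow> nat) \<Rightarrow> nat \<Rightarrow> nat \<Rightarrow> real" where
  "rp_lambda x l n = real (num_lines x n l) / (real n ^ 2 - real n)"

text \<open>Lambda_l(x,n,1/2) = sum over l' \<ge> l (lines have length at most n)\<close>
definition rp_Lambda :: "(nat \<Rightarrow> nat) \<Rightarrow> nat \<Rightarrow> nat \<Rightarrow> real" where
  "rp_Lambda x l n = (\<Sum>m\<in>{l..n}. rp_lambda x m n)"

definition inner_line :: "(nat \<Rightarrow> nat) \<Rightarrow> nat \<Rightarrow> nat \<Rightarrow> nat \<Rightarrow> bool" where
  "inner_line x i j l \<longleftrightarrow> 1 \<le> l \<and> 0 < i \<and> 0 < j \<and> i \<noteq> j \<and>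
     (\<forall>k<l. x (i + k) = x (j + k)) \<and>
     x (i - 1) \<noteq> x (j - 1) \<and> x (i + l) \<noteq> x (j + l)"

definition K_set :: "(nat \<Rightarrow> nat) \<Rightarrow> nat \<Rightarrow> (nat \<times> nat) set" where
  "K_set x l = {(i, j). inner_line x i j l}"

definition density2 :: "(nat \<times> nat) set \<Rightarrow> real" where
  "density2 M = lim (\<lambda>n. real (card (M \<inter> ({..<n} \<times> {..<n}))) / real n ^ 2)"

end

theory Submission
  imports Defs "HOL-Real_Asymp.Real_Asymp"
begin

text \<open>
  Counting along the blocks \<open>\<zeta>\<^sup>k(x m)\<close> reduces the number of zeros in a prefix of \<open>x\<close> to the
  substitution matrix, whose second eigenvalue is smaller than \<open>q\<close> in modulus by primitivity; hence
  letters have frequencies, and since occurrences of a word are, up to block boundaries, occurrences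
  inside the blocks, so do all words. Primitivity makes \<open>x\<close> uniformly recurrent, so every factor
  of \<open>x\<close> has positive frequency.

  An inner line of length \<open>l\<close> is a pair of positions where two words of length \<open>l + 2\<close> occur that
  differ exactly at their ends, so \<open>d(K\<^sub>l)\<close> is a finite sum of products of word frequencies, and it
  is positive as soon as \<open>K\<^sub>l\<close> is nonempty. Lines of the finite plot differ from inner lines only
  near the border, which gives \<open>\<lambda>\<^sub>l \<rightarrow> d(K\<^sub>l)\<close>. The first \<open>M\<close> entries of the lines of length at
  least \<open>M\<close> are pairwise distinct, so these lines have total weight at most \<open>2/M\<close>; this tail bound,
  uniform in \<open>n\<close>, gives the convergence of \<open>\<Lambda>\<^sub>l\<close>. Finally, if \<open>K\<^sub>l\<close> were empty for all large \<open>l\<close>,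
  windows of a fixed length would determine the preceding letter, and the pigeonhole principle would
  make \<open>x\<close> eventually periodic, contradicting aperiodicity.
\<close>

section \<open>Counting and frequencies\<close>

definition count_lt :: "(nat \<Rightarrow> bool) \<Rightarrow> nat \<Rightarrow> nat" where
  "count_lt P n = card {i. i < n \<and> P i}"

lemma count_lt_le: "count_lt P n \<le> n"
proof -
  have "{i. i < n \<and> P i} \<subseteq> {..<n}" by auto
  then show ?thesis unfolding count_lt_def by (metis card_lessThan card_mono finite_lessThan)
qed

lemma count_lt_0 [simp]: "count_lt P 0 = 0"
  by (simp add: count_lt_def)

lemma count_lt_cong: "(\<And>i. i < n \<Longrightarrow> P i = P' i) \<Longrightarrow> count_lt P n = count_lt P' n"
  unfolding count_lt_def by (metis (mono_tags, lifting))

lemma count_lt_add: "count_lt P (n + d) = count_lt P n + card {i. n \<le> i \<and> i < n + d \<and> P i}"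
proof -
  have "{i. i < n + d \<and> P i} = {i. i < n \<and> P i} \<union> {i. n \<le> i \<and> i < n + d \<and> P i}" by auto
  moreover have "card ({i. i < n \<and> P i} \<union> {i. n \<le> i \<and> i < n + d \<and> P i})
      = card {i. i < n \<and> P i} + card {i. n \<le> i \<and> i < n + d \<and> P i}"
    by (rule card_Un_disjoint) auto
  ultimately show ?thesis unfolding count_lt_def by simp
qed

lemma count_lt_mono: "n \<le> n' \<Longrightarrow> count_lt P n \<le> count_lt P n'"
  using count_lt_add[of P n "n' - n"] by simp

lemma count_lt_le_add_diff: "n \<le> n' \<Longrightarrow> count_lt P n' \<le> count_lt P n + (n' - n)"
proof -
  assume n: "n \<le> n'"
  have "card {i. n \<le> i \<and> i < n + (n' - n) \<and> P i} \<le> card {n..<n + (n' - n)}"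
    by (rule card_mono) auto
  then show ?thesis using count_lt_add[of P n "n' - n"] n by simp
qed

lemma count_lt_Suc: "count_lt P (Suc n) = count_lt P n + (if P n then 1 else 0)"
proof -
  have "{i. n \<le> i \<and> i < n + 1 \<and> P i} = (if P n then {n} else {})"
    by (cases "P n") (auto simp: less_Suc_eq)
  then show ?thesis using count_lt_add[of P n 1] by simp
qed

lemma count_lt_not: "count_lt (\<lambda>i. \<not> P i) n = n - count_lt P n"
proof -
  have "card ({i. i < n \<and> P i} \<union> {i. i < n \<and> \<not> P i}) = card {i. i < n \<and> P i} + card {i. i < n \<and> \<not> P i}"
    by (rule card_Un_disjoint) auto
  moreover have "{i. i < n \<and> P i} \<union> {i. i < n \<and> \<not> P i} = {..<n}" by auto
  ultimately show ?thesis unfolding count_lt_def by simp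
qed

lemma count_lt_mult: "count_lt P (Q * M) = (\<Sum>m<M. count_lt (\<lambda>r. P (Q * m + r)) Q)"
proof (induction M)
  case (Suc M)
  have "{i. Q * M \<le> i \<and> i < Q * M + Q \<and> P i} = (\<lambda>r. Q * M + r) ` {r. r < Q \<and> P (Q * M + r)}"
  proof (intro set_eqI iffI)
    fix i assume "i \<in> {i. Q * M \<le> i \<and> i < Q * M + Q \<and> P i}"
    then show "i \<in> (\<lambda>r. Q * M + r) ` {r. r < Q \<and> P (Q * M + r)}"
      by (auto intro!: image_eqI[of _ _ "i - Q * M"])
  qed auto
  then have "card {i. Q * M \<le> i \<and> i < Q * M + Q \<and> P i} = count_lt (\<lambda>r. P (Q * M + r)) Q"
    unfolding count_lt_def by (simp add: card_image inj_on_def)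
  then show ?case using Suc count_lt_add[of P "Q * M" Q] by (simp add: add.commute)
qed (simp add: count_lt_def)

lemma sum_binary_values:
  fixes g :: "nat \<Rightarrow> 'b::comm_ring_1"
  assumes "\<And>t. t < n \<Longrightarrow> h t \<in> {0, 1}"
  shows "(\<Sum>t<n. g (h t)) = of_nat (count_lt (\<lambda>t. h t = 0) n) * g 0 + of_nat (n - count_lt (\<lambda>t. h t = 0) n) * g 1"
proof -
  have "(\<Sum>t<n. g (h t)) = (\<Sum>t<n. if h t = 0 then g 0 else g 1)"
    using assms by (intro sum.cong) (metis insert_iff singletonD lessThan_iff)+
  also have "\<dots> = of_nat (count_lt (\<lambda>t. h t = 0) n) * g 0 + of_nat (count_lt (\<lambda>t. h t \<noteq> 0) n) * g 1"
    by (subst sum.If_cases) (simp_all add: count_lt_def Int_def mult.commute conj_commute)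
  finally show ?thesis using count_lt_not[of "\<lambda>t. h t = 0" n] by simp
qed

lemma count_lt_ratio_block_approx:
  assumes Q: "Q > 0" and n: "n \<ge> Q"
  shows "\<bar>real (count_lt P n) / real n - real (count_lt P (Q * (n div Q))) / real (Q * (n div Q))\<bar>
    \<le> 2 * real Q / real n"
proof -
  define A where "A = Q * (n div Q)"
  define a where "a = count_lt P A"
  define e where "e = count_lt P n - a"
  define r where "r = n - A"
  have "Q div Q \<le> n div Q" by (rule div_le_mono[OF n])
  then have A0: "A > 0" using Q unfolding A_def by simp
  have nr: "n = A + r" unfolding A_def r_def by simp
  have rQ: "r < Q" unfolding r_def A_def using Q by (simp add: minus_mult_div_eq_mod)
  have "count_lt P A \<le> count_lt P n" "count_lt P n \<le> count_lt P A + (n - A)"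
    using count_lt_mono[of A n P] count_lt_le_add_diff[of A n P] nr by simp_all
  then have c: "count_lt P n = a + e" and er: "e \<le> r" unfolding a_def e_def r_def by simp_all
  have aA: "a \<le> A" unfolding a_def by (rule count_lt_le)
  have eq: "real (count_lt P n) / real n - real a / real A
      = (real A * real e - real a * real r) / (real A * real n)"
  proof -
    have "real (count_lt P n) = real a + real e" "real n = real A + real r" using c nr by simp_all
    then show ?thesis using A0 by (simp add: field_simps)
  qed
  have "real A * real e \<le> real A * real Q" "real a * real r \<le> real A * real Q"
    using er rQ aA by (intro mult_mono; simp)+
  moreover have "real A * real e \<ge> 0" "real a * real r \<ge> 0" by simp_all
  ultimately have "\<bar>real A * real e - real a * real r\<bar> \<le> 2 * real A * real Q" by linarith
  then have "\<bar>real A * real e - real a * real r\<bar> / (real A * real n) \<le> 2 * real A * real Q / (real A * real n)"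
    by (rule divide_right_mono) simp
  then have "\<bar>real (count_lt P n) / real n - real a / real A\<bar> \<le> 2 * real Q / real n"
    unfolding eq using A0 by (simp add: abs_div)
  then show ?thesis unfolding a_def A_def .
qed

lemma convergent_if_eventually_near_const:
  fixes f :: "nat \<Rightarrow> real"
  assumes "\<And>e. e > 0 \<Longrightarrow> \<exists>c. \<forall>\<^sub>F n in sequentially. \<bar>f n - c\<bar> < e"
  shows "convergent f"
proof -
  have "Cauchy f"
  proof (rule CauchyI)
    fix e :: real assume "e > 0"
    then obtain c N where "\<forall>n\<ge>N. \<bar>f n - c\<bar> < e / 2"
      using assms[of "e / 2"] unfolding eventually_sequentially by auto
    then have "\<bar>f m - f n\<bar> < e" if "m \<ge> N" "n \<ge> N" for m n
      using that by (smt (verit) field_sum_of_halves)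
    then show "\<exists>M. \<forall>m\<ge>M. \<forall>n\<ge>M. norm (f m - f n) < e" by auto
  qed
  then show ?thesis by (simp add: Cauchy_convergent_iff)
qed

lemma convergent_count_lt_ratio_from_blocks:
  assumes "\<And>e. e > 0 \<Longrightarrow>
    \<exists>Q c. Q > 0 \<and> (\<forall>\<^sub>F M in sequentially. \<bar>real (count_lt P (Q * M)) / real (Q * M) - c\<bar> < e)"
  shows "convergent (\<lambda>n. real (count_lt P n) / real n)"
proof (rule convergent_if_eventually_near_const)
  fix e :: real assume e: "e > 0"
  then obtain Q c M0 where Q: "Q > 0"
    and M0: "\<And>M. M \<ge> M0 \<Longrightarrow> \<bar>real (count_lt P (Q * M)) / real (Q * M) - c\<bar> < e / 2"
    using assms[of "e / 2"] unfolding eventually_sequentially by auto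
  obtain N0 :: nat where N0: "4 * real Q / e < real N0" using reals_Archimedean2 by blast
  have "\<bar>real (count_lt P n) / real n - c\<bar> < e" if n: "n \<ge> max (Q * (M0 + 1)) N0" for n
  proof -
    have "Q * (M0 + 1) div Q \<le> n div Q" using n by (intro div_le_mono) simp
    then have "n div Q \<ge> M0" using Q by simp
    have "Q \<le> Q * (M0 + 1)" by simp
    then have nQ: "n \<ge> Q" using n by linarith
    have "4 * real Q / e < real n" using N0 n by simp
    then have "2 * real Q / real n < e / 2" using e nQ Q by (simp add: field_simps)
    with \<open>n div Q \<ge> M0\<close>
    show ?thesis using count_lt_ratio_block_approx[OF Q nQ, of P] M0[of "n div Q"] by linarith
  qed
  then show "\<exists>c. \<forall>\<^sub>F n in sequentially. \<bar>real (count_lt P n) / real n - c\<bar> < e"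
    unfolding eventually_sequentially by blast
qed

lemma count_lt_ratio_limit_ge:
  assumes lim: "(\<lambda>n. real (count_lt P n) / real n) \<longlonglongrightarrow> L"
    and Q: "Q > 0" and occ: "\<And>M. M \<le> count_lt P (Q * M)"
  shows "1 / real Q \<le> L"
proof -
  have "strict_mono (\<lambda>M. Q * Suc M)" using Q by (simp add: strict_mono_Suc_iff)
  from LIMSEQ_subseq_LIMSEQ[OF lim this]
  have "(\<lambda>M. real (count_lt P (Q * Suc M)) / real (Q * Suc M)) \<longlonglongrightarrow> L" by (simp add: o_def)
  moreover have "1 / real Q \<le> real (count_lt P (Q * Suc M)) / real (Q * Suc M)" for M
  proof -
    have "real (Suc M) / real (Q * Suc M) \<le> real (count_lt P (Q * Suc M)) / real (Q * Suc M)"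
      using occ[of "Suc M"] by (intro divide_right_mono) simp_all
    moreover have "real (Suc M) / real (Q * Suc M) = 1 / real Q"
      using Q by (simp only: of_nat_mult) simp
    ultimately show ?thesis by simp
  qed
  ultimately show ?thesis by (intro LIMSEQ_le_const) auto
qed

section \<open>Lines in recurrence plots\<close>

definition window :: "(nat \<Rightarrow> 'a) \<Rightarrow> nat \<Rightarrow> nat \<Rightarrow> 'a list" where
  "window y i L = map y [i..<i + L]"

lemma length_window [simp]: "length (window y i L) = L"
  by (simp add: window_def)

lemma nth_window [simp]: "j < L \<Longrightarrow> window y i L ! j = y (i + j)"
  by (simp add: window_def)

definition inner_pattern :: "nat \<Rightarrow> 'a list \<Rightarrow> 'a list \<Rightarrow> bool" where
  "inner_pattern l u v \<longleftrightarrow>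
     u ! 0 \<noteq> v ! 0 \<and> u ! (l + 1) \<noteq> v ! (l + 1) \<and> (\<forall>k<l. u ! (k + 1) = v ! (k + 1))"

lemma inner_line_iff_inner_pattern:
  assumes "l \<ge> 1" "0 < i" "0 < j"
  shows "inner_line y i j l \<longleftrightarrow> inner_pattern l (window y (i - 1) (l + 2)) (window y (j - 1) (l + 2))"
proof -
  have "window y (i - 1) (l + 2) ! (k + 1) = y (i + k) \<and> window y (j - 1) (l + 2) ! (k + 1) = y (j + k)"
    if "k \<le> l" for k
    using assms that by simp
  then show ?thesis unfolding inner_line_def inner_pattern_def using assms
    by (auto simp del: One_nat_def)
qed

lemma card_le_card_Un_if_subset:
  assumes "A \<subseteq> B \<union> C" "finite B" "finite C"
  shows "card A \<le> card B + card C"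
  using card_mono[OF _ assms(1)] card_Un_le[of B C] assms(2,3) by simp

lemma finite_rp_lines: "finite {(i, j). rp_line x n i j l}"
  by (rule finite_subset[of _ "{..n} \<times> {..n}"]) (auto simp: rp_line_def)

lemma card_square_cross_le:
  "card {(i, j). i < n \<and> j < n \<and> (i = 0 \<or> j = 0 \<or> i = c \<or> j = c)} \<le> 4 * n"
proof -
  have "{(i, j). i < n \<and> j < n \<and> (i = 0 \<or> j = 0 \<or> i = c \<or> j = c)}
      \<subseteq> ({0} \<times> {..<n} \<union> {..<n} \<times> {0}) \<union> ({c} \<times> {..<n} \<union> {..<n} \<times> {c})" by auto
  then have "card {(i, j). i < n \<and> j < n \<and> (i = 0 \<or> j = 0 \<or> i = c \<or> j = c)}
      \<le> card ({0} \<times> {..<n} \<union> {..<n} \<times> {0}) + card ({c} \<times> {..<n} \<union> {..<n} \<times> {c})"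
    by (rule card_le_card_Un_if_subset) simp_all
  also have "\<dots> \<le> (n + n) + (n + n)"
    using card_Un_le[of "{0::nat} \<times> {..<n}" "{..<n} \<times> {0::nat}"]
      card_Un_le[of "{c::nat} \<times> {..<n}" "{..<n} \<times> {c::nat}"]
    by (intro add_mono) (simp_all add: card_cartesian_product)
  finally show ?thesis by simp
qed

lemma card_square_beyond_le:
  "card {(i, j). i < n \<and> j < n \<and> (c < i \<or> c < j)} \<le> 2 * (n - Suc c) * n"
proof -
  have "{(i, j). i < n \<and> j < n \<and> (c < i \<or> c < j)} \<subseteq> {c<..<n} \<times> {..<n} \<union> {..<n} \<times> {c<..<n}"
    by auto
  then have "card {(i, j). i < n \<and> j < n \<and> (c < i \<or> c < j)}
      \<le> card ({c<..<n} \<times> {..<n}) + card ({..<n} \<times> {c<..<n})"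
    by (rule card_le_card_Un_if_subset) simp_all
  then show ?thesis by (simp add: card_cartesian_product mult.commute)
qed

text \<open>Inner lines that stay clear of the last \<open>l\<close> rows and columns are exactly the lines of the
  finite plot that avoid its border; the remaining ones lie in \<open>O(l n)\<close> positions.\<close>

lemma num_lines_le_card_inner:
  "num_lines x n l \<le> card (K_set x l \<inter> {..<n} \<times> {..<n}) + 4 * n"
proof -
  define B where "B = {(i, j). i < n \<and> j < n \<and> (i = 0 \<or> j = 0 \<or> i = n - l \<or> j = n - l)}"
  have "{(i, j). rp_line x n i j l} \<subseteq> (K_set x l \<inter> {..<n} \<times> {..<n}) \<union> B"
  proof (safe)
    fix i j assume line: "rp_line x n i j l" and notB: "(i, j) \<notin> B"
    note R = line[unfolded rp_line_def]
    then show ij: "i < n" "j < n" by linarith+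
    with notB have "0 < min i j" "max i j < n - l" using R unfolding B_def by auto
    with R show "(i, j) \<in> K_set x l" unfolding K_set_def inner_line_def by auto
  qed
  then have "num_lines x n l \<le> card (K_set x l \<inter> {..<n} \<times> {..<n}) + card B"
    unfolding num_lines_def
    by (rule card_le_card_Un_if_subset) (auto simp: B_def intro: finite_subset[of _ "{..<n} \<times> {..<n}"])
  then show ?thesis using card_square_cross_le[of n "n - l"] unfolding B_def by linarith
qed

lemma card_inner_le_num_lines:
  "card (K_set x l \<inter> {..<n} \<times> {..<n}) \<le> num_lines x n l + 2 * l * n"
proof -
  define B where "B = {(i, j). i < n \<and> j < n \<and> (n - l < i \<or> n - l < j)}"
  have "K_set x l \<inter> {..<n} \<times> {..<n} \<subseteq> {(i, j). rp_line x n i j l} \<union> B"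
  proof (safe)
    fix i j assume "(i, j) \<in> K_set x l" "i < n" "j < n" "(i, j) \<notin> B"
    then have "inner_line x i j l" "i \<le> n - l" "j \<le> n - l" unfolding K_set_def B_def by auto
    then show "rp_line x n i j l" unfolding inner_line_def rp_line_def by auto
  qed
  then have "card (K_set x l \<inter> {..<n} \<times> {..<n}) \<le> num_lines x n l + card B"
    unfolding num_lines_def
    by (rule card_le_card_Un_if_subset) (auto simp: B_def finite_rp_lines intro: finite_subset[of _ "{..<n} \<times> {..<n}"])
  moreover have "2 * (n - Suc (n - l)) * n \<le> 2 * l * n" by (intro mult_le_mono) simp_all
  then have "card B \<le> 2 * l * n"
    using card_square_beyond_le[of n "n - l"] unfolding B_def by linarith
  ultimately show ?thesis by linarith
qed

lemma rp_lambda_tendsto_if_inner_density: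
  assumes "(\<lambda>n. real (card (K_set x l \<inter> {..<n} \<times> {..<n})) / real n ^ 2) \<longlonglongrightarrow> D"
  shows "(\<lambda>n. rp_lambda x l n) \<longlonglongrightarrow> D"
proof -
  define k where "k n = real (card (K_set x l \<inter> {..<n} \<times> {..<n}))" for n
  define C where "C = 4 + 2 * real l"
  have "(\<lambda>n. k n / real n ^ 2 * (real n ^ 2 / (real n ^ 2 - real n))) \<longlonglongrightarrow> D * 1"
    using assms unfolding k_def by (intro tendsto_mult) (simp, real_asymp)
  moreover have "\<forall>\<^sub>F n in sequentially.
      k n / real n ^ 2 * (real n ^ 2 / (real n ^ 2 - real n)) = k n / (real n ^ 2 - real n)"
    using eventually_ge_at_top[of "2::nat"] by eventually_elim (simp add: field_simps)
  ultimately have main: "(\<lambda>n. k n / (real n ^ 2 - real n)) \<longlonglongrightarrow> D"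
    by (simp add: Lim_transform_eventually)
  have err: "\<bar>real (num_lines x n l) - k n\<bar> \<le> C * real n" for n
  proof -
    have "real (num_lines x n l) \<le> real (card (K_set x l \<inter> {..<n} \<times> {..<n}) + 4 * n)"
      using num_lines_le_card_inner[of x n l] by (simp only: of_nat_le_iff)
    moreover have "real (card (K_set x l \<inter> {..<n} \<times> {..<n})) \<le> real (num_lines x n l + 2 * l * n)"
      using card_inner_le_num_lines[of x l n] by (simp only: of_nat_le_iff)
    ultimately have "real (num_lines x n l) \<le> k n + 4 * real n"
      "k n \<le> real (num_lines x n l) + 2 * (real l * real n)" unfolding k_def by simp_all
    moreover have "C * real n = 4 * real n + 2 * (real l * real n)" unfolding C_def by algebra
    moreover have "0 \<le> real l * real n" by simp
    ultimately show ?thesis unfolding abs_le_iff by linarith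
  qed
  have bound: "\<forall>\<^sub>F n in sequentially.
      norm (rp_lambda x l n - k n / (real n ^ 2 - real n)) \<le> norm (C * real n / (real n ^ 2 - real n)) * 1"
    using eventually_ge_at_top[of "2::nat"]
  proof eventually_elim
    case (elim n)
    then have "real n * 1 < real n * real n" by (intro mult_strict_left_mono) auto
    then have "real n ^ 2 - real n > 0" by (simp add: power2_eq_square)
    then have "norm (rp_lambda x l n - k n / (real n ^ 2 - real n)) \<le> C * real n / (real n ^ 2 - real n)"
      using err[of n] unfolding rp_lambda_def real_norm_def diff_divide_distrib[symmetric] abs_divide
      by (simp add: divide_right_mono)
    moreover have "C * real n / (real n ^ 2 - real n) \<le> norm (C * real n / (real n ^ 2 - real n)) * 1"
      unfolding real_norm_def mult_1_right by (rule abs_ge_self)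
    ultimately show ?case by (rule order_trans)
  qed
  have "(\<lambda>n. C * real n / (real n ^ 2 - real n)) \<longlonglongrightarrow> 0" by real_asymp
  from tendsto_0_le[OF this bound]
  have "(\<lambda>n. rp_lambda x l n - k n / (real n ^ 2 - real n)) \<longlonglongrightarrow> 0" .
  from tendsto_add[OF this main] show ?thesis by simp
qed

lemma rp_line_common_point_offset_eq:
  assumes L1: "rp_line x n i j m" and L2: "rp_line x n i' j' m'"
    and "t \<le> t'" "t' < m'" and "i + t = i' + t'" "j + t = j' + t'"
  shows "t = t'"
proof (rule ccontr)
  assume "t \<noteq> t'"
  with assms have "i = i' + (t' - t)" "j = j' + (t' - t)" "0 < t' - t" by auto
  then have "0 < min i j" "i' + (t' - t - 1) = i - 1" "j' + (t' - t - 1) = j - 1" by auto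
  moreover have "t' - t - 1 < m'" using assms by linarith
  ultimately show False using L1 L2 unfolding rp_line_def by metis
qed

text \<open>Lines are maximal diagonal segments, so two lines through the same entry coincide.\<close>

lemma rp_line_eq_if_common_point:
  assumes L1: "rp_line x n i j m" and L2: "rp_line x n i' j' m'"
    and t: "t < m" "t' < m'" and e: "i + t = i' + t'" "j + t = j' + t'"
  shows "i = i' \<and> j = j' \<and> m = m'"
proof -
  consider "t \<le> t'" | "t' \<le> t" by linarith
  then have "t = t'"
  proof cases
    case 1
    show ?thesis by (rule rp_line_common_point_offset_eq[OF L1 L2 1 t(2) e])
  next
    case 2
    show ?thesis by (rule rp_line_common_point_offset_eq[OF L2 L1 2 t(1) e[symmetric], symmetric])
  qed
  then have ij: "i = i'" "j = j'" using e by auto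
  have "\<not> m < m'" if L: "rp_line x n i j m" "rp_line x n i j m'" for m m'
  proof
    assume "m < m'"
    with L(2) have "max i j < n - m" "x (i + m) = x (j + m)" unfolding rp_line_def by auto
    with L(1) show False unfolding rp_line_def by blast
  qed
  then have "m = m'" using L1 L2 unfolding ij by (meson linorder_neqE_nat)
  with ij show ?thesis by simp
qed

text \<open>The first \<open>M\<close> entries of all lines of length at least \<open>M\<close> are pairwise distinct.\<close>

lemma num_lines_tail_le: "M * (\<Sum>m\<in>{M..n}. num_lines x n m) \<le> n ^ 2"
proof -
  define Dom where "Dom = (SIGMA m:{M..n}. {(i, j). rp_line x n i j m} \<times> {..<M})"
  define f where "f = (\<lambda>(m :: nat, (i :: nat, j :: nat), t :: nat). (i + t, j + t))"
  have "M * (\<Sum>m\<in>{M..n}. num_lines x n m) = card Dom"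
    unfolding Dom_def num_lines_def
    by (subst card_SigmaI) (auto simp: card_cartesian_product finite_rp_lines sum_distrib_left mult.commute)
  also have "\<dots> = card (f ` Dom)"
  proof (rule card_image[symmetric], rule inj_onI)
    fix a b assume a: "a \<in> Dom" and b: "b \<in> Dom" and fab: "f a = f b"
    obtain m i j t m' i' j' t' where ab: "a = (m, (i, j), t)" "b = (m', (i', j'), t')"
      by (metis prod.collapse)
    have "rp_line x n i j m" "rp_line x n i' j' m'" "t < m" "t' < m'"
      using a b unfolding ab Dom_def by auto
    moreover have "i + t = i' + t'" "j + t = j' + t'" using fab unfolding ab f_def by auto
    ultimately have "i = i' \<and> j = j' \<and> m = m'" by (rule rp_line_eq_if_common_point)
    with \<open>i + t = i' + t'\<close> show "a = b" unfolding ab by simp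
  qed
  also have "\<dots> \<le> card ({..<n} \<times> {..<n})"
    by (rule card_mono) (auto simp: Dom_def f_def rp_line_def)
  finally show ?thesis by (simp add: card_cartesian_product power2_eq_square)
qed

lemma rp_lambda_nonneg: "rp_lambda x m n \<ge> 0"
proof -
  have "real n \<le> real n ^ 2" by (cases n) (auto simp: power2_eq_square)
  then show ?thesis unfolding rp_lambda_def by simp
qed

lemma rp_lambda_tail_le:
  assumes K: "K \<ge> 1" and n: "n \<ge> 2"
  shows "(\<Sum>m\<in>{K..n}. rp_lambda x m n) \<le> 2 / real K"
proof -
  have "real n * 2 \<le> real n * real n" using n by (intro mult_left_mono) auto
  then have pos: "real n ^ 2 - real n > 0" and half: "real n ^ 2 \<le> 2 * (real n ^ 2 - real n)"
    using n by (simp_all add: power2_eq_square)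
  have "real K * (\<Sum>m\<in>{K..n}. real (num_lines x n m)) \<le> real n ^ 2"
    using num_lines_tail_le[of K x n] by (simp flip: of_nat_sum of_nat_mult of_nat_power)
  then have "(\<Sum>m\<in>{K..n}. real (num_lines x n m)) \<le> real n ^ 2 / real K"
    using K by (simp add: field_simps)
  then have "(\<Sum>m\<in>{K..n}. real (num_lines x n m)) / (real n ^ 2 - real n)
      \<le> (real n ^ 2 / real K) / (real n ^ 2 - real n)"
    using pos by (intro divide_right_mono) simp_all
  then have "(\<Sum>m\<in>{K..n}. rp_lambda x m n) \<le> (real n ^ 2 / real K) / (real n ^ 2 - real n)"
    unfolding rp_lambda_def sum_divide_distrib .
  also have "\<dots> \<le> 2 / real K" using pos K half by (simp add: field_simps)
  finally show ?thesis .
qed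

lemma rp_Lambda_split:
  assumes "K + l \<le> n + 1"
  shows "rp_Lambda x l n = (\<Sum>m<K. rp_lambda x (m + l) n) + (\<Sum>m\<in>{K + l..n}. rp_lambda x m n)"
proof -
  have "{l..n} = {l..<K + l} \<union> {K + l..n}" using assms by auto
  then have "rp_Lambda x l n = (\<Sum>m\<in>{l..<K + l}. rp_lambda x m n) + (\<Sum>m\<in>{K + l..n}. rp_lambda x m n)"
    unfolding rp_Lambda_def by (simp add: sum.union_disjoint ivl_disj_int)
  moreover have "(\<Sum>m\<in>{l..<K + l}. rp_lambda x m n) = (\<Sum>m<K. rp_lambda x (m + l) n)"
    using sum.shift_bounds_nat_ivl[of "\<lambda>m. rp_lambda x m n" 0 l K] by (simp add: atLeast0LessThan)
  ultimately show ?thesis by simp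
qed

lemma summable_and_tendsto_suminf_if_uniform_tails:
  fixes a :: "nat \<Rightarrow> nat \<Rightarrow> real" and S e :: "nat \<Rightarrow> real"
  assumes lim: "\<And>m. (\<lambda>n. a m n) \<longlonglongrightarrow> b m"
    and tail: "\<And>K. \<forall>\<^sub>F n in sequentially. \<bar>S n - (\<Sum>m<K. a m n)\<bar> \<le> e K"
    and e: "e \<longlonglongrightarrow> 0"
  shows "summable b \<and> S \<longlonglongrightarrow> suminf b"
proof -
  define B where "B K = (\<Sum>m<K. b m)" for K
  have partial: "(\<lambda>n. \<Sum>m<K. a m n) \<longlonglongrightarrow> B K" for K
    unfolding B_def by (intro tendsto_sum lim)
  have close: "\<bar>B K - B K'\<bar> \<le> e K + e K'" for K K'
  proof (rule tendsto_upperbound)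
    show "(\<lambda>n. \<bar>(\<Sum>m<K. a m n) - (\<Sum>m<K'. a m n)\<bar>) \<longlonglongrightarrow> \<bar>B K - B K'\<bar>"
      by (intro tendsto_intros partial)
    show "\<forall>\<^sub>F n in sequentially. \<bar>(\<Sum>m<K. a m n) - (\<Sum>m<K'. a m n)\<bar> \<le> e K + e K'"
      using tail[of K] tail[of K'] by eventually_elim linarith
  qed simp
  have small: "\<forall>\<^sub>F K in sequentially. \<bar>e K\<bar> < r" if "r > 0" for r
    using e that unfolding tendsto_iff dist_real_def by simp
  have "Cauchy B"
  proof (rule CauchyI)
    fix r :: real assume "r > 0"
    then obtain K0 where K0: "\<And>K. K \<ge> K0 \<Longrightarrow> \<bar>e K\<bar> < r / 2"
      using small[of "r / 2"] unfolding eventually_sequentially by auto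
    have "norm (B m - B n) < r" if "m \<ge> K0" "n \<ge> K0" for m n
      using close[of m n] K0[OF that(1)] K0[OF that(2)] by simp
    then show "\<exists>M. \<forall>m\<ge>M. \<forall>n\<ge>M. norm (B m - B n) < r" by blast
  qed
  then have summable: "summable b"
    unfolding summable_iff_convergent B_def[symmetric] by (simp add: Cauchy_convergent_iff)
  then have B_lim: "B \<longlonglongrightarrow> suminf b"
    unfolding B_def by (rule summable_LIMSEQ)
  have B_close: "\<bar>B K - suminf b\<bar> \<le> e K" for K
  proof (rule tendsto_le[of sequentially])
    show "(\<lambda>K'. \<bar>B K - B K'\<bar>) \<longlonglongrightarrow> \<bar>B K - suminf b\<bar>" by (intro tendsto_intros B_lim)
    show "(\<lambda>K'. e K + e K') \<longlonglongrightarrow> e K" using tendsto_add[OF tendsto_const e] by simp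
  qed (use close in auto)
  have "\<forall>\<^sub>F n in sequentially. dist (S n) (suminf b) < r" if r: "r > 0" for r
  proof -
    obtain K where K: "\<bar>e K\<bar> < r / 3" using eventually_happens'[OF _ small[of "r / 3"]] r by auto
    have "\<forall>\<^sub>F n in sequentially. dist (\<Sum>m<K. a m n) (B K) < r / 3"
      by (rule tendstoD[OF partial]) (use r in simp)
    then show ?thesis using tail[of K]
    proof eventually_elim
      case (elim n)
      then show ?case using B_close[of K] K unfolding dist_real_def by linarith
    qed
  qed
  with summable show ?thesis unfolding tendsto_iff by blast
qed

lemma rp_Lambda_tendsto:
  assumes l: "l \<ge> 1" and lim: "\<And>m. m \<ge> l \<Longrightarrow> (\<lambda>n. rp_lambda x m n) \<longlonglongrightarrow> D m"
  shows "summable (\<lambda>m. D (m + l)) \<and> (\<lambda>n. rp_Lambda x l n) \<longlonglongrightarrow> (\<Sum>m. D (m + l))"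
proof (rule summable_and_tendsto_suminf_if_uniform_tails)
  show "(\<lambda>n. rp_lambda x (m + l) n) \<longlonglongrightarrow> D (m + l)" for m by (rule lim) simp
  show "(\<lambda>K. 2 / real (K + l)) \<longlonglongrightarrow> 0" by real_asymp
  show "\<forall>\<^sub>F n in sequentially. \<bar>rp_Lambda x l n - (\<Sum>m<K. rp_lambda x (m + l) n)\<bar> \<le> 2 / real (K + l)" for K
    using eventually_ge_at_top[of "K + l + 2"]
  proof eventually_elim
    case (elim n)
    then have "\<bar>rp_Lambda x l n - (\<Sum>m<K. rp_lambda x (m + l) n)\<bar> = (\<Sum>m\<in>{K + l..n}. rp_lambda x m n)"
      using rp_Lambda_split[of K l n x] by (simp add: sum_nonneg rp_lambda_nonneg)
    also have "\<dots> \<le> 2 / real (K + l)" using elim l by (intro rp_lambda_tail_le) simp_all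
    finally show ?case .
  qed
qed

section \<open>Long inner lines and periodicity\<close>

definition eventually_periodic :: "(nat \<Rightarrow> 'a) \<Rightarrow> bool" where
  "eventually_periodic y \<longleftrightarrow> (\<exists>p>0. \<exists>N. \<forall>s\<ge>N. y (s + p) = y s)"

lemma eventually_periodic_if_suffixes_eq:
  assumes "i < j" and "\<And>k. y (i + k) = y (j + k)"
  shows "eventually_periodic y"
  unfolding eventually_periodic_def
proof (intro exI conjI allI impI)
  fix s assume "s \<ge> i"
  then show "y (s + (j - i)) = y s" using assms(1) assms(2)[of "s - i"] by (simp add: algebra_simps)
qed (use assms(1) in simp)

lemma inner_line_if_windows_eq:
  assumes ij: "0 < i" "0 < j" and w: "window x i L = window x j L"
    and pred: "x (i - 1) \<noteq> x (j - 1)" and mismatch: "x (i + k) \<noteq> x (j + k)" and L: "L \<ge> 1"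
  shows "\<exists>l\<ge>L. inner_line x i j l"
proof -
  define l where "l = (LEAST k. x (i + k) \<noteq> x (j + k))"
  have l_ne: "x (i + l) \<noteq> x (j + l)" unfolding l_def by (rule LeastI[of "\<lambda>k. x (i + k) \<noteq> x (j + k)", OF mismatch])
  have agree: "\<forall>k<l. x (i + k) = x (j + k)" unfolding l_def using not_less_Least by blast
  have "\<forall>k<L. x (i + k) = x (j + k)" using w by (metis nth_window)
  then have "L \<le> l" using l_ne by (meson not_le)
  moreover have "i \<noteq> j" using pred by auto
  ultimately show ?thesis using ij L pred agree l_ne unfolding inner_line_def by auto
qed

lemma window_eq_shift_back:
  assumes det: "\<And>i j. 0 < i \<Longrightarrow> 0 < j \<Longrightarrow> window y i L = window y j L \<Longrightarrow> y (i - 1) = y (j - 1)"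
    and w: "window y a L = window y b L" and t: "t \<le> a" "t \<le> b"
  shows "window y (a - t) L = window y (b - t) L"
  using t
proof (induction t)
  case (Suc t)
  then have IH: "window y (a - t) L = window y (b - t) L" by simp
  have pred: "y (a - t - 1) = y (b - t - 1)" using Suc.prems by (intro det IH) auto
  show ?case
  proof (rule nth_equalityI)
    fix k assume "k < length (window y (a - Suc t) L)"
    then have k: "k < L" by simp
    show "window y (a - Suc t) L ! k = window y (b - Suc t) L ! k"
    proof (cases k)
      case 0
      then show ?thesis using k pred by simp
    next
      case (Suc k')
      then have "window y (a - t) L ! k' = window y (b - t) L ! k'" using IH by simp
      then show ?thesis using Suc k Suc.prems by (simp add: Suc_diff_Suc)
    qed
  qed simp
qed (use w in simp)

text \<open>Pigeonhole on the windows starting in \<open>{n+1..n+1+D}\<close>, then propagating the coincidence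
  backwards, gives a period \<open>p \<le> D\<close> of the prefix of length \<open>n\<close>.\<close>

lemma bounded_prefix_period_if_windows_determine_predecessor:
  assumes fin: "finite (range y)" and L: "L \<ge> 1"
    and det: "\<And>i j. 0 < i \<Longrightarrow> 0 < j \<Longrightarrow> window y i L = window y j L \<Longrightarrow> y (i - 1) = y (j - 1)"
  shows "\<exists>p\<in>{1..card (range y) ^ L}. \<forall>s\<le>n. y (s + p) = y s"
proof -
  define D where "D = card (range y) ^ L"
  define A where "A = {n + 1..n + 1 + D}"
  have "(\<lambda>t. window y t L) ` A \<subseteq> {w. set w \<subseteq> range y \<and> length w = L}"
    unfolding window_def by auto
  then have "card ((\<lambda>t. window y t L) ` A) \<le> card {w. set w \<subseteq> range y \<and> length w = L}"
    using fin by (intro card_mono) (simp_all add: finite_lists_length_eq)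
  also have "\<dots> = D" unfolding D_def using fin by (simp add: card_lists_length_eq)
  also have "D < card A" unfolding A_def by simp
  finally have "card ((\<lambda>t. window y t L) ` A) < card A" .
  then obtain a b where "a \<in> A" "b \<in> A" "a \<noteq> b" "window y a L = window y b L"
    using pigeonhole unfolding inj_on_def by blast
  then obtain a b where ab: "a \<in> A" "b \<in> A" "a < b" "window y a L = window y b L"
    by (metis linorder_neqE_nat)
  have "y (s + (b - a)) = y s" if "s \<le> n" for s
  proof -
    have "window y (a - (a - s)) L = window y (b - (a - s)) L"
      using that ab unfolding A_def by (intro window_eq_shift_back[OF det ab(4)]) auto
    moreover have "a - (a - s) = s" "b - (a - s) = s + (b - a)" using that ab unfolding A_def by auto
    ultimately show ?thesis using L by (metis nth_window add_0_right less_le_trans zero_less_one)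
  qed
  moreover have "b - a \<in> {1..D}" using ab unfolding A_def by auto
  ultimately show ?thesis unfolding D_def by blast
qed

lemma periodic_if_bounded_prefix_periods:
  fixes y :: "nat \<Rightarrow> 'a"
  assumes "\<And>n. \<exists>p\<in>{1..D}. \<forall>s\<le>n. y (s + p) = y s"
  shows "\<exists>p>0. \<forall>s. y (s + p) = y s"
proof (rule ccontr)
  assume "\<not> ?thesis"
  then have ne: "\<forall>p>0. \<exists>s. y (s + p) \<noteq> y s" by blast
  have "\<exists>s. y (s + p) \<noteq> y s" if "p \<in> {1..D}" for p
    using ne that by (simp add: Suc_le_eq)
  then obtain g where g: "\<And>p. p \<in> {1..D} \<Longrightarrow> y (g p + p) \<noteq> y (g p)" by metis
  obtain p where "p \<in> {1..D}" "\<forall>s\<le>Max (g ` {1..D}). y (s + p) = y s" using assms by blast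
  moreover have "g p \<le> Max (g ` {1..D})" using \<open>p \<in> {1..D}\<close> by simp
  ultimately show False using g by blast
qed

lemma eventually_periodic_if_no_long_inner_lines:
  assumes fin: "finite (range y)" and none: "\<And>l. l \<ge> L \<Longrightarrow> K_set y l = {}"
  shows "eventually_periodic y"
proof (cases "\<exists>i j. i < j \<and> (\<forall>k. y (i + k) = y (j + k))")
  case True
  then show ?thesis using eventually_periodic_if_suffixes_eq by blast
next
  case False
  have det: "y (i - 1) = y (j - 1)"
    if ij: "0 < i" "0 < j" "window y i (Suc L) = window y j (Suc L)" for i j
  proof (rule ccontr)
    assume pred: "y (i - 1) \<noteq> y (j - 1)"
    then have "i \<noteq> j" by auto
    then obtain k where "y (i + k) \<noteq> y (j + k)" using False by (metis linorder_neqE_nat)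
    then obtain l where "l \<ge> Suc L" "inner_line y i j l"
      using inner_line_if_windows_eq[OF ij pred] by auto
    then show False using none[of l] unfolding K_set_def by auto
  qed
  have "\<exists>p\<in>{1..card (range y) ^ Suc L}. \<forall>s\<le>n. y (s + p) = y s" for n
    by (rule bounded_prefix_period_if_windows_determine_predecessor[OF fin _ det]) simp_all
  then have "\<exists>p>0. \<forall>s. y (s + p) = y s" by (rule periodic_if_bounded_prefix_periods)
  then show ?thesis unfolding eventually_periodic_def by blast
qed

section \<open>Fixed points of binary constant-length substitutions\<close>

lemma subst_word_funpow:
  "(subst_word z ^^ k) xs = concat (map (\<lambda>c. (subst_word z ^^ k) [c]) xs)"
proof (induction k arbitrary: xs)
  case 0
  then show ?case by (induction xs) auto
next
  case (Suc k)
  have "(subst_word z ^^ Suc k) xs = subst_word z ((subst_word z ^^ k) xs)" by simp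
  also have "\<dots> = subst_word z (concat (map (\<lambda>c. (subst_word z ^^ k) [c]) xs))"
    by (subst Suc.IH) (rule refl)
  also have "\<dots> = concat (map (\<lambda>c. subst_word z ((subst_word z ^^ k) [c])) xs)"
    by (induction xs) (auto simp: subst_word_def)
  finally show ?case by simp
qed

lemma subst_iter_add: "subst_iter z (k + K) a = concat (map (subst_iter z k) (subst_iter z K a))"
proof -
  have "subst_iter z (k + K) a = (subst_word z ^^ k) ((subst_word z ^^ K) [a])"
    by (simp add: subst_iter_def funpow_add)
  also have "\<dots> = concat (map (subst_iter z k) (subst_iter z K a))"
    by (subst subst_word_funpow) (simp add: subst_iter_def[abs_def])
  finally show ?thesis .
qed

lemma subst_iter_0 [simp]: "subst_iter z 0 a = [a]"
  by (simp add: subst_iter_def)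

lemma subst_iter_1 [simp]: "subst_iter z (Suc 0) a = z a"
  by (simp add: subst_iter_def subst_word_def)

lemma subst_iter_Suc: "subst_iter z (Suc k) a = concat (map (subst_iter z k) (z a))"
  using subst_iter_add[of z k 1 a] by simp

lemma length_concat_map_const:
  "(\<And>y. y \<in> set ys \<Longrightarrow> length (g y) = Q) \<Longrightarrow> length (concat (map g ys)) = length ys * Q"
  by (induction ys) auto

lemma nth_concat_map_const:
  assumes "\<And>y. y \<in> set ys \<Longrightarrow> length (g y) = Q" "i < length ys" "r < Q"
  shows "concat (map g ys) ! (Q * i + r) = g (ys ! i) ! r"
  using assms
proof (induction ys arbitrary: i)
  case (Cons y ys)
  then show ?case by (cases i) (simp_all add: nth_append add.assoc)
qed simp

locale binary_substitution_fixed_point =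
  fixes \<zeta> :: "nat \<Rightarrow> nat list" and q :: nat and x :: "nat \<Rightarrow> nat"
  assumes const_length: "binary_const_length \<zeta> q"
    and primitive: "primitive_subst \<zeta>"
    and aperiodic: "aperiodic_subst \<zeta>"
    and starts_with_0: "\<zeta> 0 ! 0 = 0"
    and fixed_point: "is_fixed_point_limit \<zeta> x"
begin

abbreviation S :: "nat \<Rightarrow> nat \<Rightarrow> nat list" where
  "S \<equiv> subst_iter \<zeta>"

lemma q_ge_2: "q \<ge> 2"
  using const_length by (simp add: binary_const_length_def)

lemma length_subst_letter: "a \<in> {0, 1} \<Longrightarrow> length (\<zeta> a) = q"
  using const_length by (auto simp: binary_const_length_def)

lemma set_subst_letter: "a \<in> {0, 1} \<Longrightarrow> set (\<zeta> a) \<subseteq> {0, 1}"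
  using const_length by (auto simp: binary_const_length_def)

lemma set_subst_iter: "a \<in> {0, 1} \<Longrightarrow> set (S k a) \<subseteq> {0, 1}"
proof (induction k arbitrary: a)
  case (Suc k)
  show ?case
  proof
    fix c assume "c \<in> set (S (Suc k) a)"
    then obtain y where "y \<in> set (\<zeta> a)" "c \<in> set (S k y)" unfolding subst_iter_Suc by auto
    then show "c \<in> {0, 1}" using Suc.IH set_subst_letter[OF Suc.prems] by blast
  qed
qed simp

lemma length_subst_iter: "a \<in> {0, 1} \<Longrightarrow> length (S k a) = q ^ k"
proof (induction k arbitrary: a)
  case (Suc k)
  then have "length (S (Suc k) a) = length (\<zeta> a) * q ^ k"
    unfolding subst_iter_Suc using set_subst_letter by (intro length_concat_map_const) blast
  then show ?case using length_subst_letter[OF Suc.prems] by simp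
qed simp

lemma less_q_power: "n < q ^ n"
proof -
  have "n < 2 ^ n" by (rule less_exp)
  also have "(2::nat) ^ n \<le> q ^ n" using q_ge_2 by (rule power_mono) simp
  finally show ?thesis .
qed

lemma subst_iter_0_prefix: "k \<le> K \<Longrightarrow> i < q ^ k \<Longrightarrow> S K 0 ! i = S k 0 ! i"
proof (induction K rule: dec_induct)
  case (step K)
  have "\<zeta> 0 = 0 # tl (\<zeta> 0)"
    using length_subst_letter[of 0] q_ge_2 starts_with_0 by (cases "\<zeta> 0") auto
  then have "S (Suc K) 0 = S K 0 @ concat (map (S K) (tl (\<zeta> 0)))"
    by (subst subst_iter_Suc) (metis concat.simps(2) list.simps(9))
  moreover have "q ^ k \<le> q ^ K" using step q_ge_2 by (simp add: power_increasing)
  ultimately show ?case using step length_subst_iter[of 0 K] by (simp add: nth_append)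
qed simp

lemma x_eq_subst_iter_nth: "i < q ^ k \<Longrightarrow> x i = S k 0 ! i"
proof -
  assume i: "i < q ^ k"
  obtain K where "\<forall>k'\<ge>K. S k' 0 ! i = x i"
    using fixed_point unfolding is_fixed_point_limit_def by blast
  then show ?thesis using subst_iter_0_prefix[of k "max k K" i] i by simp
qed

lemma x_binary: "x i \<in> {0, 1}"
  using x_eq_subst_iter_nth[OF less_q_power] set_subst_iter[of 0 i] length_subst_iter[of 0 i] less_q_power[of i]
  by (metis insertI1 nth_mem subsetD)

lemma x_block: "r < q ^ k \<Longrightarrow> x (q ^ k * m + r) = S k (x m) ! r"
proof -
  assume r: "r < q ^ k"
  have "q ^ k * m + r < q ^ k * (m + 1)" using r by simp
  also have "\<dots> \<le> q ^ k * q ^ m" using less_q_power[of m] by (intro mult_le_mono2) simp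
  finally have "x (q ^ k * m + r) = S (k + m) 0 ! (q ^ k * m + r)"
    by (intro x_eq_subst_iter_nth) (simp add: power_add)
  also have "\<dots> = S k (S m 0 ! m) ! r"
  proof -
    have "\<And>y. y \<in> set (S m 0) \<Longrightarrow> length (S k y) = q ^ k"
      using set_subst_iter[of 0 m] length_subst_iter by blast
    then show ?thesis unfolding subst_iter_add
      using length_subst_iter[of 0 m] less_q_power[of m] r by (intro nth_concat_map_const) auto
  qed
  finally show ?thesis using x_eq_subst_iter_nth[OF less_q_power[of m]] by simp
qed

definition zeros :: "nat \<Rightarrow> nat \<Rightarrow> nat" where
  "zeros k b = count_lt (\<lambda>r. S k b ! r = 0) (q ^ k)"

lemma zeros_le: "zeros k b \<le> q ^ k"
  unfolding zeros_def by (rule count_lt_le)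

lemma zeros_1: "zeros 1 b = count_lt (\<lambda>t. \<zeta> b ! t = 0) q"
  by (simp add: zeros_def)

lemma zeros_Suc:
  assumes b: "b \<in> {0, 1}"
  shows "real (zeros (Suc k) b) = real (zeros 1 b) * real (zeros k 0) + (real q - real (zeros 1 b)) * real (zeros k 1)"
proof -
  have len: "\<And>y. y \<in> set (\<zeta> b) \<Longrightarrow> length (S k y) = q ^ k"
    using set_subst_letter[OF b] length_subst_iter by blast
  have "zeros (Suc k) b = count_lt (\<lambda>r. concat (map (S k) (\<zeta> b)) ! r = 0) (q ^ k * q)"
    unfolding zeros_def subst_iter_Suc by (simp add: mult.commute)
  also have "\<dots> = (\<Sum>t<q. zeros k (\<zeta> b ! t))"
    unfolding count_lt_mult zeros_def
    using nth_concat_map_const[of "\<zeta> b" "S k" "q ^ k", OF len] length_subst_letter[OF b]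
    by (intro sum.cong refl count_lt_cong) simp_all
  finally have "real (zeros (Suc k) b) = (\<Sum>t<q. real (zeros k (\<zeta> b ! t)))" by simp
  also have "\<dots> = real (zeros 1 b) * real (zeros k 0) + real (q - zeros 1 b) * real (zeros k 1)"
    unfolding zeros_1 using set_subst_letter[OF b] length_subst_letter[OF b]
    by (intro sum_binary_values) (auto simp: subset_iff)
  finally show ?thesis using zeros_le[of 1 b] by (simp add: of_nat_diff)
qed

text \<open>\<open>zeros 1 0 - zeros 1 1\<close> is the second eigenvalue of the substitution matrix.\<close>

lemma zeros_diff_power: "real (zeros k 0) - real (zeros k 1) = (real (zeros 1 0) - real (zeros 1 1)) ^ k"
proof (induction k)
  case 0
  have "zeros 0 0 = 1" "zeros 0 1 = 0" by (simp_all add: zeros_def count_lt_Suc)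
  then show ?case by simp
next
  case (Suc k)
  then show ?case using zeros_Suc[of 0 k] zeros_Suc[of 1 k] by (simp add: algebra_simps)
qed

lemma zeros_1_0_bounds: "1 \<le> zeros 1 0" "zeros 1 0 < q"
proof -
  have "0 \<in> {t. t < q \<and> \<zeta> 0 ! t = 0}" using starts_with_0 q_ge_2 by simp
  then have "card {t. t < q \<and> \<zeta> 0 ! t = 0} > 0" by (subst card_gt_0_iff) auto
  then show "1 \<le> zeros 1 0" unfolding zeros_1 count_lt_def by simp
  show "zeros 1 0 < q"
  proof (rule ccontr)
    assume "\<not> zeros 1 0 < q"
    then have "card {t. t < q \<and> \<zeta> 0 ! t = 0} = card {..<q}" using zeros_le[of 1 0] unfolding zeros_1 count_lt_def by simp
    then have "{t. t < q \<and> \<zeta> 0 ! t = 0} = {..<q}" by (intro card_subset_eq) auto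
    then have "\<forall>t<q. \<zeta> 0 ! t = 0" by blast
    then have "set (\<zeta> 0) \<subseteq> {0}" using length_subst_letter[of 0] by (auto simp: in_set_conv_nth)
    then have "set (S k 0) \<subseteq> {0}" for k by (induction k) (auto simp: subst_iter_Suc)
    moreover obtain k where "1 \<in> set (S k 0)" using primitive unfolding primitive_subst_def by blast
    ultimately show False by auto
  qed
qed

definition contraction :: real where
  "contraction = \<bar>real (zeros 1 0) - real (zeros 1 1)\<bar> / real q"

lemma contraction_bounds: "0 \<le> contraction" "contraction < 1"
proof -
  have "\<bar>real (zeros 1 0) - real (zeros 1 1)\<bar> < real q"
    using zeros_1_0_bounds zeros_le[of 1 1] by (simp add: abs_less_iff)
  then show "0 \<le> contraction" "contraction < 1" unfolding contraction_def using q_ge_2 by simp_all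
qed

lemma count_zeros_blocks: "count_lt (\<lambda>i. x i = 0) (q ^ k * M) = (\<Sum>m<M. zeros k (x m))"
  unfolding count_lt_mult zeros_def by (intro sum.cong refl count_lt_cong) (simp add: x_block)

lemma sum_over_x:
  fixes g :: "nat \<Rightarrow> real"
  shows "(\<Sum>m<M. g (x m)) = real (count_lt (\<lambda>i. x i = 0) M) * g 0 + (real M - real (count_lt (\<lambda>i. x i = 0) M)) * g 1"
  using sum_binary_values[of M x g] x_binary count_lt_le[of _ M] by (simp add: of_nat_diff)

lemma zero_ratio_blocks_close:
  assumes "M \<ge> 1"
  shows "\<bar>real (count_lt (\<lambda>i. x i = 0) (q ^ k * M)) / real (q ^ k * M) - real (zeros k 0) / real (q ^ k)\<bar>
    \<le> contraction ^ k"
proof -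
  define A where "A = real (count_lt (\<lambda>i. x i = 0) M)"
  have Q: "real (q ^ k) > 0" using q_ge_2 by simp
  have "\<bar>real M - A\<bar> \<le> real M" unfolding A_def using count_lt_le[of _ M] by simp
  have "real (count_lt (\<lambda>i. x i = 0) (q ^ k * M)) = A * real (zeros k 0) + (real M - A) * real (zeros k 1)"
    unfolding count_zeros_blocks A_def using sum_over_x[of "\<lambda>b. real (zeros k b)" M] by simp
  then have "real (count_lt (\<lambda>i. x i = 0) (q ^ k * M)) / real (q ^ k * M) - real (zeros k 0) / real (q ^ k)
      = (real M - A) / real M * ((real (zeros k 1) - real (zeros k 0)) / real (q ^ k))"
    using assms Q by (simp add: field_simps)
  then have "\<bar>real (count_lt (\<lambda>i. x i = 0) (q ^ k * M)) / real (q ^ k * M) - real (zeros k 0) / real (q ^ k)\<bar>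
      = \<bar>real M - A\<bar> / real M * (\<bar>real (zeros k 0) - real (zeros k 1)\<bar> / real (q ^ k))"
    by (simp add: abs_mult abs_div abs_minus_commute)
  also have "\<dots> \<le> 1 * (\<bar>real (zeros k 0) - real (zeros k 1)\<bar> / real (q ^ k))"
    using \<open>\<bar>real M - A\<bar> \<le> real M\<close> assms by (intro mult_right_mono) simp_all
  also have "\<dots> = contraction ^ k"
    by (subst zeros_diff_power) (simp add: contraction_def power_abs power_divide)
  finally show ?thesis .
qed

lemma letter_freq_convergent: "convergent (\<lambda>n. real (count_lt (\<lambda>i. x i = 0) n) / real n)"
proof (rule convergent_count_lt_ratio_from_blocks)
  fix e :: real assume "e > 0"
  then obtain k where k: "contraction ^ k < e"
    using real_arch_pow_inv contraction_bounds by blast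
  have "\<forall>\<^sub>F M in sequentially.
      \<bar>real (count_lt (\<lambda>i. x i = 0) (q ^ k * M)) / real (q ^ k * M) - real (zeros k 0) / real (q ^ k)\<bar> < e"
    using eventually_ge_at_top[of "1::nat"]
    by eventually_elim (rule le_less_trans[OF zero_ratio_blocks_close k])
  then show "\<exists>Q c. Q > 0 \<and> (\<forall>\<^sub>F M in sequentially.
      \<bar>real (count_lt (\<lambda>i. x i = 0) (Q * M)) / real (Q * M) - c\<bar> < e)"
    using q_ge_2 by (intro exI[of _ "q ^ k"]) auto
qed

definition zero_freq :: real where
  "zero_freq = lim (\<lambda>n. real (count_lt (\<lambda>i. x i = 0) n) / real n)"

lemma zero_freq: "(\<lambda>n. real (count_lt (\<lambda>i. x i = 0) n) / real n) \<longlonglongrightarrow> zero_freq"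
  unfolding zero_freq_def using letter_freq_convergent by (simp add: convergent_LIMSEQ_iff)

definition occurrences :: "nat list \<Rightarrow> nat \<Rightarrow> nat" where
  "occurrences u n = count_lt (\<lambda>i. window x i (length u) = u) n"

definition block_occurrences :: "nat list \<Rightarrow> nat \<Rightarrow> nat \<Rightarrow> nat" where
  "block_occurrences u k b =
     count_lt (\<lambda>r. r + length u \<le> q ^ k \<and> map ((!) (S k b)) [r..<r + length u] = u) (q ^ k)"

lemma window_in_block:
  assumes "r + L \<le> q ^ k"
  shows "window x (q ^ k * m + r) L = map ((!) (S k (x m))) [r..<r + L]"
  by (rule nth_equalityI) (use assms x_block in \<open>simp_all add: add.assoc\<close>)

lemma block_occurrences_le_count:
  "block_occurrences u k (x m) \<le> count_lt (\<lambda>r. window x (q ^ k * m + r) (length u) = u) (q ^ k)"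
  unfolding block_occurrences_def count_lt_def using window_in_block
  by (intro card_mono) auto

lemma count_le_block_occurrences:
  "count_lt (\<lambda>r. window x (q ^ k * m + r) (length u) = u) (q ^ k) \<le> block_occurrences u k (x m) + length u"
proof -
  have "{r. r < q ^ k \<and> window x (q ^ k * m + r) (length u) = u}
      \<subseteq> {r. r < q ^ k \<and> r + length u \<le> q ^ k \<and> map ((!) (S k (x m))) [r..<r + length u] = u}
        \<union> {q ^ k - length u..<q ^ k}"
    using window_in_block by auto
  then show ?thesis
    unfolding block_occurrences_def count_lt_def by (rule order_trans[OF card_le_card_Un_if_subset]) auto
qed

lemma occurrences_blocks_close:
  "\<bar>real (occurrences u (q ^ k * M)) - (\<Sum>m<M. real (block_occurrences u k (x m)))\<bar> \<le> real (length u) * real M"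
proof -
  have occ: "real (occurrences u (q ^ k * M)) = (\<Sum>m<M. real (count_lt (\<lambda>r. window x (q ^ k * m + r) (length u) = u) (q ^ k)))"
    unfolding occurrences_def count_lt_mult by simp
  have "(\<Sum>m<M. real (block_occurrences u k (x m))) \<le> real (occurrences u (q ^ k * M))"
    unfolding occ by (intro sum_mono) (simp add: block_occurrences_le_count)
  moreover have "real (occurrences u (q ^ k * M)) \<le> (\<Sum>m<M. real (block_occurrences u k (x m)) + real (length u))"
    unfolding occ by (intro sum_mono) (metis of_nat_add of_nat_le_iff count_le_block_occurrences)
  ultimately show ?thesis by (simp add: sum.distrib mult.commute)
qed

definition block_freq :: "nat list \<Rightarrow> nat \<Rightarrow> real" where
  "block_freq u k =
     (zero_freq * real (block_occurrences u k 0) + (1 - zero_freq) * real (block_occurrences u k 1)) / real (q ^ k)"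

lemma word_ratio_blocks_close:
  assumes M: "M \<ge> 1"
  shows "\<bar>real (occurrences u (q ^ k * M)) / real (q ^ k * M) - block_freq u k\<bar>
    \<le> real (length u) / real (q ^ k) + \<bar>real (count_lt (\<lambda>i. x i = 0) M) / real M - zero_freq\<bar>"
proof -
  define Q where "Q = real (q ^ k)"
  define A where "A = real (count_lt (\<lambda>i. x i = 0) M)"
  define c0 where "c0 = real (block_occurrences u k 0)"
  define c1 where "c1 = real (block_occurrences u k 1)"
  define Sc where "Sc = (\<Sum>m<M. real (block_occurrences u k (x m)))"
  have Q: "Q > 0" unfolding Q_def using q_ge_2 by simp
  have QM: "Q * real M > 0" using Q M by simp
  have "\<bar>real (occurrences u (q ^ k * M)) / real (q ^ k * M) - Sc / (Q * real M)\<bar> \<le> real (length u) / Q"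
  proof -
    have "\<bar>real (occurrences u (q ^ k * M)) - Sc\<bar> / (Q * real M) \<le> real (length u) * real M / (Q * real M)"
      using occurrences_blocks_close[of u k M] QM unfolding Sc_def by (intro divide_right_mono) simp_all
    then show ?thesis using QM M unfolding Q_def by (simp add: abs_div diff_divide_distrib[symmetric])
  qed
  moreover have "\<bar>Sc / (Q * real M) - block_freq u k\<bar> \<le> \<bar>A / real M - zero_freq\<bar>"
  proof -
    have "Sc = A * c0 + (real M - A) * c1"
      unfolding Sc_def A_def c0_def c1_def using sum_over_x[of "\<lambda>b. real (block_occurrences u k b)" M] by simp
    moreover have "real M \<noteq> 0" "real (q ^ k) \<noteq> 0" using M q_ge_2 by simp_all
    ultimately have "Sc / (Q * real M) - block_freq u k = (A / real M - zero_freq) * ((c0 - c1) / Q)"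
      unfolding block_freq_def c0_def c1_def Q_def by (simp add: field_simps)
    then have eq: "\<bar>Sc / (Q * real M) - block_freq u k\<bar> = \<bar>A / real M - zero_freq\<bar> * (\<bar>c0 - c1\<bar> / Q)"
      using Q by (simp only: abs_mult abs_divide abs_of_pos)
    moreover have "\<bar>c0 - c1\<bar> / Q \<le> 1"
    proof -
      have "c0 \<le> Q" "c1 \<le> Q" "0 \<le> c0" "0 \<le> c1"
        unfolding c0_def c1_def Q_def block_occurrences_def using count_lt_le by (simp_all add: of_nat_mono)
      then show ?thesis using Q by (simp add: abs_le_iff)
    qed
    then show ?thesis unfolding eq by (rule mult_left_le) simp
  qed
  ultimately show ?thesis unfolding A_def Q_def by (smt (verit))
qed

lemma word_freq_convergent: "convergent (\<lambda>n. real (occurrences u n) / real n)"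
  unfolding occurrences_def
proof (rule convergent_count_lt_ratio_from_blocks)
  fix e :: real assume e: "e > 0"
  obtain k :: nat where "2 * real (length u) / e < real k" using reals_Archimedean2 by blast
  then have "2 * real (length u) / e < real (q ^ k)" using less_q_power[of k] by linarith
  then have k: "real (length u) / real (q ^ k) < e / 2" using e q_ge_2 by (simp add: field_simps)
  have "\<forall>\<^sub>F M in sequentially. \<bar>real (count_lt (\<lambda>i. x i = 0) M) / real M - zero_freq\<bar> < e / 2"
    using tendstoD[OF zero_freq, of "e / 2"] e by (simp add: dist_real_def)
  then have "\<forall>\<^sub>F M in sequentially. \<bar>real (occurrences u (q ^ k * M)) / real (q ^ k * M) - block_freq u k\<bar> < e"
    using eventually_ge_at_top[of "1::nat"]
  proof eventually_elim
    case (elim M)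
    then show ?case using word_ratio_blocks_close[OF elim(2), of u k] k by linarith
  qed
  then show "\<exists>Q c. Q > 0 \<and> (\<forall>\<^sub>F M in sequentially.
      \<bar>real (count_lt (\<lambda>i. window x i (length u) = u) (Q * M)) / real (Q * M) - c\<bar> < e)"
    using q_ge_2 unfolding occurrences_def by (intro exI[of _ "q ^ k"]) auto
qed

definition word_freq :: "nat list \<Rightarrow> real" where
  "word_freq u = lim (\<lambda>n. real (occurrences u n) / real n)"

lemma word_freq: "(\<lambda>n. real (occurrences u n) / real n) \<longlonglongrightarrow> word_freq u"
  unfolding word_freq_def using word_freq_convergent by (simp add: convergent_LIMSEQ_iff)

lemma word_freq_nonneg: "word_freq u \<ge> 0"
  by (rule LIMSEQ_le_const[OF word_freq]) auto

definition recurrence_exponent :: nat where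
  "recurrence_exponent = (SOME p. \<forall>a\<in>{0, 1}. \<forall>b\<in>{0, 1}. b \<in> set (S p a))"

lemma letter_in_subst_iter_recurrence_exponent:
  "a \<in> {0, 1} \<Longrightarrow> b \<in> {0, 1} \<Longrightarrow> b \<in> set (S recurrence_exponent a)"
  using someI_ex[of "\<lambda>p. \<forall>a\<in>{0, 1}. \<forall>b\<in>{0, 1}. b \<in> set (S p a)"] primitive
  unfolding recurrence_exponent_def primitive_subst_def by blast

text \<open>Uniform recurrence: \<open>\<zeta>\<^sup>k(a)\<close> occurs in every aligned block of length \<open>q\<^sup>k\<^sup>+\<^sup>p\<close>, since the
  block is \<open>\<zeta>\<^sup>k\<close> applied to \<open>\<zeta>\<^sup>p(x m)\<close>, which contains the letter \<open>a\<close>.\<close>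

lemma subst_iter_occurs_in_block:
  assumes a: "a \<in> {0, 1}"
  defines "p \<equiv> recurrence_exponent"
  shows "\<exists>P. q ^ (k + p) * m \<le> P \<and> P + q ^ k \<le> q ^ (k + p) * (m + 1) \<and> (\<forall>s<q ^ k. x (P + s) = S k a ! s)"
proof -
  have "a \<in> set (S p (x m))" using letter_in_subst_iter_recurrence_exponent a x_binary unfolding p_def by blast
  then obtain t where t: "t < q ^ p" "S p (x m) ! t = a"
    using length_subst_iter[OF x_binary[of m], of p] by (metis in_set_conv_nth)
  have xj: "x (q ^ p * m + t) = a" using x_block[OF t(1)] t(2) by simp
  show ?thesis
  proof (intro exI conjI allI impI)
    show "q ^ (k + p) * m \<le> q ^ k * (q ^ p * m + t)" by (simp add: power_add algebra_simps)
    have "q ^ k * (q ^ p * m + t) + q ^ k = q ^ k * (q ^ p * m + (t + 1))" by (simp add: algebra_simps)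
    also have "\<dots> \<le> q ^ k * (q ^ p * m + q ^ p)" using t(1) by (intro mult_le_mono2) simp
    finally show "q ^ k * (q ^ p * m + t) + q ^ k \<le> q ^ (k + p) * (m + 1)" by (simp add: power_add algebra_simps)
    show "x (q ^ k * (q ^ p * m + t) + s) = S k a ! s" if "s < q ^ k" for s
      using x_block[OF that] xj by simp
  qed
qed

lemma occurrences_linear_lower_bound:
  assumes u: "window x i (length u) = u"
  shows "\<exists>Q>0. \<forall>M. M \<le> occurrences u (Q * M)"
proof -
  define k where "k = i + length u"
  define Q where "Q = q ^ (k + recurrence_exponent)"
  have ik: "i + length u \<le> q ^ k" "i < q ^ k" using less_q_power[of k] unfolding k_def by simp_all
  have "\<forall>m. \<exists>P. Q * m \<le> P \<and> P + q ^ k \<le> Q * (m + 1) \<and> (\<forall>s<q ^ k. x (P + s) = S k 0 ! s)"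
    using subst_iter_occurs_in_block[of 0 k] unfolding Q_def by simp
  then obtain T where T: "\<And>m. Q * m \<le> T m" "\<And>m. T m + q ^ k \<le> Q * (m + 1)"
    "\<And>m s. s < q ^ k \<Longrightarrow> x (T m + s) = S k 0 ! s"
    by metis
  have occurs: "window x (T m + i) (length u) = u" for m
  proof (rule nth_equalityI)
    fix j assume "j < length (window x (T m + i) (length u))"
    then have j: "j < length u" by simp
    then have "window x (T m + i) (length u) ! j = S k 0 ! (i + j)" using T(3) ik by (simp add: add.assoc)
    also have "\<dots> = u ! j" using x_eq_subst_iter_nth[of "i + j" k] ik j nth_window[OF j, of x i] u by simp
    finally show "window x (T m + i) (length u) ! j = u ! j" .
  qed simp
  have pos: "Q * m \<le> T m + i" "T m + i < Q * (m + 1)" for m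
    using T(1)[of m] T(2)[of m] ik by (simp_all add: trans_le_add1)
  have "M \<le> occurrences u (Q * M)" for M
  proof -
    have inj: "inj_on (\<lambda>m. T m + i) {..<M}"
    proof (rule inj_onI)
      fix m m' assume "T m + i = T m' + i"
      moreover have "(T m + i) div Q = m" for m using pos[of m] by (simp add: div_nat_eqI mult.commute)
      ultimately show "m = m'" by metis
    qed
    have sub: "(\<lambda>m. T m + i) ` {..<M} \<subseteq> {j. j < Q * M \<and> window x j (length u) = u}"
    proof (rule image_subsetI)
      fix m assume "m \<in> {..<M}"
      then have "Q * (m + 1) \<le> Q * M" by (intro mult_le_mono2) simp
      then show "T m + i \<in> {j. j < Q * M \<and> window x j (length u) = u}"
        using pos(2)[of m] occurs[of m] by simp
    qed
    have "M = card ((\<lambda>m. T m + i) ` {..<M})" using card_image[OF inj] by simp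
    also have "\<dots> \<le> card {j. j < Q * M \<and> window x j (length u) = u}" by (rule card_mono[OF _ sub]) simp
    finally show ?thesis unfolding occurrences_def count_lt_def .
  qed
  moreover have "Q > 0" unfolding Q_def using q_ge_2 by simp
  ultimately show ?thesis by blast
qed

lemma word_freq_pos: "window x i (length u) = u \<Longrightarrow> word_freq u > 0"
proof -
  assume "window x i (length u) = u"
  then obtain Q where Q: "Q > 0" "\<And>M. M \<le> occurrences u (Q * M)"
    using occurrences_linear_lower_bound by blast
  have "1 / real Q \<le> word_freq u"
    using word_freq Q unfolding occurrences_def by (rule count_lt_ratio_limit_ge)
  then show ?thesis using Q by (smt (verit) divide_pos_pos of_nat_0_less_iff)
qed

lemma x_not_eventually_periodic: "\<not> eventually_periodic x"
proof
  assume "eventually_periodic x"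
  then obtain p N where p: "p > 0" and per: "\<And>s. s \<ge> N \<Longrightarrow> x (s + p) = x s"
    unfolding eventually_periodic_def by blast
  obtain y where y: "y \<in> subshift \<zeta>" and aper: "\<not> shift_periodic y"
    using aperiodic unfolding aperiodic_subst_def by blast
  have "y (i + p) = y i" for i
  proof -
    define w where "w = map y [i..<i + (p + 1)]"
    have "w \<in> subst_lang \<zeta>" using y unfolding subshift_def w_def by blast
    then obtain k a pre suf where a: "a \<in> {0, 1}" and ska: "S k a = pre @ w @ suf"
      unfolding subst_lang_def is_factor_def by blast
    obtain P where P: "q ^ (k + recurrence_exponent) * N \<le> P" "\<forall>s<q ^ k. x (P + s) = S k a ! s"
      using subst_iter_occurs_in_block[OF a, of k N] by blast
    have lw: "length w = p + 1" unfolding w_def by simp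
    have "length pre + (p + 1) \<le> q ^ k" using length_subst_iter[OF a, of k] ska lw by simp
    then have xw: "x (P + length pre + j) = w ! j" if "j \<le> p" for j
      using P(2) that ska lw by (simp add: nth_append add.assoc)
    have "1 * N \<le> q ^ (k + recurrence_exponent) * N" using q_ge_2 by (intro mult_le_mono1) simp
    then have "x (P + length pre + p) = x (P + length pre)" using P(1) by (intro per) linarith
    then have "w ! p = w ! 0" using xw[of p] xw[of 0] by simp
    then show ?thesis unfolding w_def by (simp del: upt_Suc add: nth_map_upt)
  qed
  then show False using aper p unfolding shift_periodic_def by blast
qed

definition binary_words :: "nat \<Rightarrow> nat list set" where
  "binary_words L = {u. set u \<subseteq> {0, 1} \<and> length u = L}"

lemma finite_binary_words: "finite (binary_words L)"
  unfolding binary_words_def by (rule finite_lists_length_eq) simp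

lemma window_in_binary_words: "window x i L \<in> binary_words L"
proof -
  have "set (window x i L) \<subseteq> range x" by (auto simp: window_def)
  also have "\<dots> \<subseteq> {0, 1}" unfolding image_subset_iff using x_binary by blast
  finally show ?thesis unfolding binary_words_def by simp
qed

lemma sum_windows_eq_sum_occurrences:
  fixes g :: "nat list \<Rightarrow> real"
  shows "(\<Sum>i<N. g (window x i L)) = (\<Sum>u\<in>binary_words L. real (occurrences u N) * g u)"
proof (induction N)
  case (Suc N)
  have "(\<Sum>u\<in>binary_words L. real (occurrences u (Suc N)) * g u)
      = (\<Sum>u\<in>binary_words L. real (occurrences u N) * g u + (if window x N L = u then g u else 0))"
    by (intro sum.cong refl) (auto simp: occurrences_def count_lt_Suc binary_words_def algebra_simps)
  also have "\<dots> = (\<Sum>u\<in>binary_words L. real (occurrences u N) * g u) + g (window x N L)"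
    using window_in_binary_words[of N L] by (simp add: sum.distrib finite_binary_words)
  finally show ?case using Suc by simp
qed (simp add: occurrences_def)

definition inner_line_density :: "nat \<Rightarrow> real" where
  "inner_line_density l = (\<Sum>u\<in>binary_words (l + 2). \<Sum>v\<in>binary_words (l + 2).
     if inner_pattern l u v then word_freq u * word_freq v else 0)"

lemma card_pattern_pairs:
  "real (card {(a, b). a < N \<and> b < N \<and> inner_pattern l (window x a (l + 2)) (window x b (l + 2))})
    = (\<Sum>u\<in>binary_words (l + 2). \<Sum>v\<in>binary_words (l + 2).
         if inner_pattern l u v then real (occurrences u N) * real (occurrences v N) else 0)"
proof -
  define W where "W = binary_words (l + 2)"
  define I where "I u v = (if inner_pattern l u v then 1 else 0 :: real)" for u v :: "nat list"
  have "{(a, b). a < N \<and> b < N \<and> inner_pattern l (window x a (l + 2)) (window x b (l + 2))}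
      = Sigma {..<N} (\<lambda>a. {b\<in>{..<N}. inner_pattern l (window x a (l + 2)) (window x b (l + 2))})"
    by auto
  then have "real (card {(a, b). a < N \<and> b < N \<and> inner_pattern l (window x a (l + 2)) (window x b (l + 2))})
      = (\<Sum>a<N. \<Sum>b<N. I (window x a (l + 2)) (window x b (l + 2)))"
    by (simp add: card_SigmaI I_def sum.If_cases Int_def)
  also have "\<dots> = (\<Sum>a<N. \<Sum>v\<in>W. real (occurrences v N) * I (window x a (l + 2)) v)"
    unfolding W_def by (simp only: sum_windows_eq_sum_occurrences)
  also have "\<dots> = (\<Sum>v\<in>W. real (occurrences v N) * (\<Sum>a<N. I (window x a (l + 2)) v))"
    by (subst sum.swap) (simp add: sum_distrib_left)
  also have "\<dots> = (\<Sum>v\<in>W. real (occurrences v N) * (\<Sum>u\<in>W. real (occurrences u N) * I u v))"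
    unfolding W_def using sum_windows_eq_sum_occurrences[where g = "\<lambda>w. I w _" and N = N and L = "l + 2"] by simp
  also have "\<dots> = (\<Sum>u\<in>W. \<Sum>v\<in>W. if inner_pattern l u v then real (occurrences u N) * real (occurrences v N) else 0)"
    unfolding I_def sum_distrib_left by (subst (2) sum.swap) (intro sum.cong refl, simp)
  finally show ?thesis unfolding W_def .
qed

lemma card_inner_lines_in_square:
  assumes l: "l \<ge> 1"
  shows "real (card (K_set x l \<inter> {..<n} \<times> {..<n}))
    = (\<Sum>u\<in>binary_words (l + 2). \<Sum>v\<in>binary_words (l + 2).
         if inner_pattern l u v then real (occurrences u (n - 1)) * real (occurrences v (n - 1)) else 0)"
proof -
  define B where "B = {(a, b). a < n - 1 \<and> b < n - 1 \<and> inner_pattern l (window x a (l + 2)) (window x b (l + 2))}"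
  have "K_set x l \<inter> {..<n} \<times> {..<n} = (\<lambda>(a, b). (Suc a, Suc b)) ` B"
  proof (intro set_eqI iffI)
    fix p assume "p \<in> K_set x l \<inter> {..<n} \<times> {..<n}"
    then obtain i j where ij: "p = (i, j)" "inner_line x i j l" "i < n" "j < n" unfolding K_set_def by auto
    then have "0 < i" "0 < j" unfolding inner_line_def by auto
    then have "(i - 1, j - 1) \<in> B" unfolding B_def using ij inner_line_iff_inner_pattern[OF l] by auto
    then show "p \<in> (\<lambda>(a, b). (Suc a, Suc b)) ` B" using ij \<open>0 < i\<close> \<open>0 < j\<close>
      by (auto intro!: image_eqI[of _ _ "(i - 1, j - 1)"])
  next
    fix p assume "p \<in> (\<lambda>(a, b). (Suc a, Suc b)) ` B"
    then show "p \<in> K_set x l \<inter> {..<n} \<times> {..<n}"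
      unfolding B_def K_set_def using inner_line_iff_inner_pattern[OF l] by auto
  qed
  moreover have "card ((\<lambda>(a, b). (Suc a, Suc b)) ` B) = card B" by (rule card_image) (auto simp: inj_on_def)
  ultimately have "real (card (K_set x l \<inter> {..<n} \<times> {..<n})) = real (card B)" by simp
  also have "\<dots> = (\<Sum>u\<in>binary_words (l + 2). \<Sum>v\<in>binary_words (l + 2).
         if inner_pattern l u v then real (occurrences u (n - 1)) * real (occurrences v (n - 1)) else 0)"
    unfolding B_def by (rule card_pattern_pairs)
  finally show ?thesis .
qed

lemma occurrences_pred_ratio: "(\<lambda>n. real (occurrences u (n - 1)) / real n) \<longlonglongrightarrow> word_freq u"
proof -
  have "(\<lambda>m. real (occurrences u m) / real m * (real m / real (Suc m))) \<longlonglongrightarrow> word_freq u * 1"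
    by (intro tendsto_mult word_freq LIMSEQ_n_over_Suc_n)
  moreover have "real (occurrences u m) / real m * (real m / real (Suc m)) = real (occurrences u (Suc m - 1)) / real (Suc m)" for m
    by (cases "m = 0") (simp_all add: occurrences_def)
  ultimately have "(\<lambda>m. real (occurrences u (Suc m - 1)) / real (Suc m)) \<longlonglongrightarrow> word_freq u" by simp
  then show ?thesis by (rule LIMSEQ_imp_Suc)
qed

lemma inner_lines_density_tendsto:
  assumes "l \<ge> 1"
  shows "(\<lambda>n. real (card (K_set x l \<inter> {..<n} \<times> {..<n})) / real n ^ 2) \<longlonglongrightarrow> inner_line_density l"
proof -
  have "real (card (K_set x l \<inter> {..<n} \<times> {..<n})) / real n ^ 2
     = (\<Sum>u\<in>binary_words (l + 2). \<Sum>v\<in>binary_words (l + 2). if inner_pattern l u v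
          then (real (occurrences u (n - 1)) / real n) * (real (occurrences v (n - 1)) / real n) else 0)" for n
    unfolding card_inner_lines_in_square[OF assms] sum_divide_distrib
    by (intro sum.cong refl) (simp add: power2_eq_square)
  moreover have if_tendsto: "(\<lambda>n. if c then f n else 0) \<longlonglongrightarrow> (if c then L else 0)"
    if "f \<longlonglongrightarrow> L" for c and f :: "nat \<Rightarrow> real" and L
    using that by simp
  ultimately show ?thesis unfolding inner_line_density_def
    by (simp only:) (intro tendsto_sum if_tendsto tendsto_mult occurrences_pred_ratio)
qed

lemma density2_K_set: "l \<ge> 1 \<Longrightarrow> density2 (K_set x l) = inner_line_density l"
  unfolding density2_def using inner_lines_density_tendsto by (simp add: limI)

lemma inner_line_density_nonneg: "inner_line_density l \<ge> 0"
  unfolding inner_line_density_def by (intro sum_nonneg) (simp add: word_freq_nonneg)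

lemma inner_line_density_pos:
  assumes "inner_line x i j l"
  shows "inner_line_density l > 0"
proof -
  have l: "l \<ge> 1" and ij: "0 < i" "0 < j" using assms unfolding inner_line_def by auto
  define u where "u = window x (i - 1) (l + 2)"
  define v where "v = window x (j - 1) (l + 2)"
  define F where "F u v = (if inner_pattern l u v then word_freq u * word_freq v else 0)" for u v
  have F_nonneg: "F a b \<ge> 0" for a b unfolding F_def by (simp add: word_freq_nonneg)
  have "inner_pattern l u v" using inner_line_iff_inner_pattern[OF l ij] assms unfolding u_def v_def by simp
  moreover have "word_freq u > 0" "word_freq v > 0" unfolding u_def v_def by (rule word_freq_pos, simp)+
  ultimately have "0 < F u v" unfolding F_def by simp
  also have "\<dots> \<le> (\<Sum>b\<in>binary_words (l + 2). F u b)"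
    by (rule member_le_sum) (simp_all add: v_def window_in_binary_words F_nonneg finite_binary_words)
  also have "\<dots> \<le> (\<Sum>a\<in>binary_words (l + 2). \<Sum>b\<in>binary_words (l + 2). F a b)"
    by (rule member_le_sum[where f = "\<lambda>a. \<Sum>b\<in>binary_words (l + 2). F a b"])
      (simp_all add: u_def window_in_binary_words F_nonneg finite_binary_words sum_nonneg)
  finally show ?thesis unfolding inner_line_density_def F_def .
qed

lemma rp_lambda_tendsto_density: "l \<ge> 1 \<Longrightarrow> (\<lambda>n. rp_lambda x l n) \<longlonglongrightarrow> density2 (K_set x l)"
  using rp_lambda_tendsto_if_inner_density inner_lines_density_tendsto density2_K_set by simp

lemma density2_K_set_nonneg: "density2 (K_set x l) \<ge> 0"
proof (cases "l \<ge> 1")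
  case False
  then have "K_set x l = {}" unfolding K_set_def inner_line_def by auto
  then show ?thesis unfolding density2_def by (simp add: limI)
qed (simp add: density2_K_set inner_line_density_nonneg)

lemma density2_K_set_pos_unbounded: "\<exists>l\<ge>L. density2 (K_set x l) > 0"
proof (rule ccontr)
  assume none: "\<not> ?thesis"
  have "K_set x l = {}" if l: "l \<ge> Suc L" for l
  proof (rule ccontr)
    assume "K_set x l \<noteq> {}"
    then obtain i j where "inner_line x i j l" unfolding K_set_def by auto
    then have "density2 (K_set x l) > 0"
      using inner_line_density_pos density2_K_set[of l] l by simp
    then show False using none l by auto
  qed
  moreover have "finite (range x)"
    by (rule finite_subset[of _ "{0, 1}"]) (use x_binary in \<open>auto simp only: image_subset_iff\<close>)
  ultimately have "eventually_periodic x" by (intro eventually_periodic_if_no_long_inner_lines)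
  then show False using x_not_eventually_periodic by simp
qed

lemma infinite_positive_density2_K_set: "infinite {l. density2 (K_set x l) > 0}"
proof
  assume "finite {l. density2 (K_set x l) > 0}"
  then obtain B where "\<And>l. density2 (K_set x l) > 0 \<Longrightarrow> l \<le> B"
    unfolding finite_nat_set_iff_bounded_le by blast
  then show False using density2_K_set_pos_unbounded[of "Suc B"] by fastforce
qed

lemma suminf_density2_K_set_pos:
  assumes "summable (\<lambda>m. density2 (K_set x (m + l)))"
  shows "(\<Sum>m. density2 (K_set x (m + l))) > 0"
proof -
  obtain m where "m \<ge> l" "density2 (K_set x m) > 0" using density2_K_set_pos_unbounded by blast
  then show ?thesis
    using suminf_pos2[OF assms, of "m - l"] density2_K_set_nonneg by simp
qed

end

theorem proposition3p7:
  fixes \<zeta> :: "nat \<Rightarrow> nat list" and q :: nat and x :: "nat \<Rightarrow> nat"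
  assumes "binary_const_length \<zeta> q"
    and "primitive_subst \<zeta>"
    and "aperiodic_subst \<zeta>"
    and "\<zeta> 0 ! 0 = 0"
    and "is_fixed_point_limit \<zeta> x"
  shows "(\<forall>l\<ge>1.
           (\<lambda>n. rp_lambda x l n) \<longlonglongrightarrow> density2 (K_set x l) \<and>
           summable (\<lambda>m. density2 (K_set x (m + l))) \<and>
           (\<lambda>n. rp_Lambda x l n) \<longlonglongrightarrow> (\<Sum>m. density2 (K_set x (m + l))) \<and>
           (\<Sum>m. density2 (K_set x (m + l))) > 0) \<and>
         infinite {l. density2 (K_set x l) > 0}"
proof -
  interpret binary_substitution_fixed_point \<zeta> q x
    using assms by unfold_locales
  show ?thesis
  proof (intro conjI allI impI infinite_positive_density2_K_set)
    fix l :: nat assume l: "l \<ge> 1"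
    have "\<And>m. m \<ge> l \<Longrightarrow> (\<lambda>n. rp_lambda x m n) \<longlonglongrightarrow> density2 (K_set x m)"
      using l rp_lambda_tendsto_density by simp
    from rp_Lambda_tendsto[OF l this]
    show "summable (\<lambda>m. density2 (K_set x (m + l)))"
      and "(\<lambda>n. rp_Lambda x l n) \<longlonglongrightarrow> (\<Sum>m. density2 (K_set x (m + l)))"
      and "(\<Sum>m. density2 (K_set x (m + l))) > 0"
      using suminf_density2_K_set_pos by blast+
    show "(\<lambda>n. rp_lambda x l n) \<longlonglongrightarrow> density2 (K_set x l)" using l by (rule rp_lambda_tendsto_density)
  qed
qed

end
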